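(* Let $\rho\in(0,\infty)$ and $d=d(L)$ with $dL\to\theta\in[0,\infty)$. Let $h\in C^3([0,1])$ and $H(\mu)=\mu(h)$. Then $$\lim_{N/L\to\rho}\ \sup_{\eta\in\Omega_{L,N}}\Big|\mathfrak L_{L,N}\big(H\circ\mu_{L,N}^{(\cdot)}\big)(\eta)-\mu_{L,N}^{(\eta)}(A_\theta h)\Big|=0.$$
   Context: Inclusion process: $\Omega_{L,N}=\{\eta\in\mathbb N_0^L:\sum_x\eta_x=N\}$, $\mathfrak L_{L,N}f(\eta)=\sum_{x\ne y}\eta_x(d+\eta_y)[f(\eta^{x,y})-f(\eta)]$, $\eta^{x,y}=\eta-e^x+e^y$; "$N/L\to\rho$" means $N,L\to\infty$ with $N/L\to\rho$. $\mu^{(\eta)}_{L,N}=\sum_x\frac{\eta_x}N\delta_{\eta_x/N}$, so $\mu^{(\eta)}_{L,N}(h)=\sum_x\frac{\eta_x}Nh(\eta_x/N)$. $A_\theta h(z)=z(1-z)h''(z)+(2-(2+\theta)z)h'(z)+\theta(h(0)-h(z))$. *)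

theory Defs
  imports "HOL-Analysis.Analysis"
begin

definition Omega :: "nat \<Rightarrow> nat \<Rightarrow> (nat \<Rightarrow> nat) set" where
  "Omega L N = {\<eta>. (\<forall>x. L \<le> x \<longrightarrow> \<eta> x = 0) \<and> (\<Sum>x<L. \<eta> x) = N}"

definition move :: "(nat \<Rightarrow> nat) \<Rightarrow> nat \<Rightarrow> nat \<Rightarrow> (nat \<Rightarrow> nat)" where
  "move \<eta> x y = \<eta>(x := \<eta> x - 1, y := \<eta> y + 1)"

definition gen :: "nat \<Rightarrow> real \<Rightarrow> ((nat \<Rightarrow> nat) \<Rightarrow> real) \<Rightarrow> (nat \<Rightarrow> nat) \<Rightarrow> real" where
  "gen L d f \<eta> = (\<Sum>x<L. \<Sum>y\<in>{..<L} - {x}.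
      real (\<eta> x) * (d + real (\<eta> y)) * (f (move \<eta> x y) - f \<eta>))"

definition emp :: "nat \<Rightarrow> nat \<Rightarrow> (nat \<Rightarrow> nat) \<Rightarrow> (real \<Rightarrow> real) \<Rightarrow> real" where
  "emp L N \<eta> g = (\<Sum>x<L. real (\<eta> x) / real N * g (real (\<eta> x) / real N))"

text \<open>The operator A_theta, with h1, h2 the first and second derivatives of h.\<close>
definition A_op :: "real \<Rightarrow> (real \<Rightarrow> real) \<Rightarrow> (real \<Rightarrow> real) \<Rightarrow> (real \<Rightarrow> real) \<Rightarrow> real \<Rightarrow> real" where
  "A_op \<theta> h h1 h2 z = z * (1 - z) * h2 z + (2 - (2 + \<theta>) * z) * h1 z + \<theta> * (h 0 - h z)"

end

theory Submission
  imports Defs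
begin

text \<open>
  Write mu^eta(h) = sum_x g(eta_x/N) with g(u) = u h(u). A jump x -> y changes this only at the two
  sites involved, by g(a - 1/N) - g(a) + g(b + 1/N) - g(b) with a = eta_x/N and b = eta_y/N.
  Expanding to second order with a cubic remainder costs O(M (dL + N)/N^2) in total, where M bounds
  g', g'' and g''' on [0, 1]. In the
  expanded sum the first-order terms of size N cancel by antisymmetry in x and y, and since
  sum_x a_x = 1 what remains is mu^eta(A_theta h) up to terms of size M (d + |dL - theta| + dL/N),
  uniformly in eta; all of these vanish as N, L -> infinity with dL -> theta.
\<close>

lemma abs_diff_le_derivative_bound:
  fixes F F' :: "real \<Rightarrow> real"
  assumes der: "\<And>v. v \<in> {0..1} \<Longrightarrow> (F has_real_derivative F' v) (at v within {0..1})"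
    and u: "u \<in> {0..1}" and w: "w \<in> {0..1}"
    and bound: "\<And>v. min u w \<le> v \<Longrightarrow> v \<le> max u w \<Longrightarrow> \<bar>F' v\<bar> \<le> K"
  shows "\<bar>F w - F u\<bar> \<le> K * \<bar>w - u\<bar>"
proof -
  have sub: "{min u w..max u w} \<subseteq> {0..1}" using u w by auto
  show ?thesis
  proof (rule field_differentiable_bound[where S = "{min u w..max u w}", simplified real_norm_def])
    show "(F has_field_derivative F' v) (at v within {min u w..max u w})"
      if "v \<in> {min u w..max u w}" for v
      using der sub that by (blast intro: DERIV_subset)
  qed (use bound in auto)
qed

lemma taylor2_remainder_bound:
  fixes g g1 g2 g3 :: "real \<Rightarrow> real"
  assumes d1: "\<And>v. v \<in> {0..1} \<Longrightarrow> (g has_real_derivative g1 v) (at v within {0..1})"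
    and d2: "\<And>v. v \<in> {0..1} \<Longrightarrow> (g1 has_real_derivative g2 v) (at v within {0..1})"
    and d3: "\<And>v. v \<in> {0..1} \<Longrightarrow> (g2 has_real_derivative g3 v) (at v within {0..1})"
    and bound: "\<And>v. v \<in> {0..1} \<Longrightarrow> \<bar>g3 v\<bar> \<le> M"
    and u: "u \<in> {0..1}" and w: "w \<in> {0..1}"
  shows "\<bar>g w - g u - (w - u) * g1 u - (w - u)^2 / 2 * g2 u\<bar> \<le> M * \<bar>w - u\<bar>^3"
proof -
  have M: "M \<ge> 0" using bound[of 0] by auto
  have between: "v \<in> {0..1}" "\<bar>v - u\<bar> \<le> \<bar>w - u\<bar>" if "min u w \<le> v" "v \<le> max u w" for v
    using that u w by auto
  have R0: "\<bar>g2 v - g2 u\<bar> \<le> M * \<bar>w - u\<bar>" if "min u w \<le> v" "v \<le> max u w" for v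
  proof -
    have "\<bar>g2 v - g2 u\<bar> \<le> M * \<bar>v - u\<bar>"
      by (rule abs_diff_le_derivative_bound[OF d3 u between(1)[OF that]])
         (use u between(1)[OF that] in \<open>auto intro!: bound\<close>)
    also have "\<dots> \<le> M * \<bar>w - u\<bar>" using between[OF that] M by (intro mult_left_mono) auto
    finally show ?thesis .
  qed
  have R1: "\<bar>g1 v - g1 u - (v - u) * g2 u\<bar> \<le> M * \<bar>w - u\<bar>^2"
    if "min u w \<le> v" "v \<le> max u w" for v
  proof -
    have "\<bar>(g1 v - g1 u - (v - u) * g2 u) - (g1 u - g1 u - (u - u) * g2 u)\<bar> \<le> (M * \<bar>w - u\<bar>) * \<bar>v - u\<bar>"
    proof (rule abs_diff_le_derivative_bound[OF _ u between(1)[OF that]])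
      show "((\<lambda>t. g1 t - g1 u - (t - u) * g2 u) has_real_derivative g2 t - g2 u) (at t within {0..1})"
        if "t \<in> {0..1}" for t
        using d2[OF that] by (auto intro!: derivative_eq_intros)
    qed (use R0 that in auto)
    also have "\<dots> \<le> (M * \<bar>w - u\<bar>) * \<bar>w - u\<bar>"
      using between[OF that] M by (intro mult_left_mono) auto
    finally show ?thesis by (simp add: power2_eq_square)
  qed
  have "\<bar>(g w - g u - (w - u) * g1 u - (w - u)^2 / 2 * g2 u)
         - (g u - g u - (u - u) * g1 u - (u - u)^2 / 2 * g2 u)\<bar> \<le> (M * \<bar>w - u\<bar>^2) * \<bar>w - u\<bar>"
  proof (rule abs_diff_le_derivative_bound[OF _ u w])
    show "((\<lambda>t. g t - g u - (t - u) * g1 u - (t - u)^2 / 2 * g2 u)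
            has_real_derivative g1 t - g1 u - (t - u) * g2 u) (at t within {0..1})"
      if "t \<in> {0..1}" for t
      using d1[OF that] by (auto intro!: derivative_eq_intros simp: power2_eq_square field_simps)
  qed (use R1 in auto)
  thus ?thesis by (simp add: power2_eq_square power3_eq_cube mult.assoc)
qed

lemma Omega_le: "\<eta> \<in> Omega L N \<Longrightarrow> \<eta> x \<le> N"
proof (cases "x < L")
  case True
  assume "\<eta> \<in> Omega L N"
  moreover have "\<eta> x \<le> (\<Sum>z<L. \<eta> z)" using True by (intro member_le_sum) auto
  ultimately show ?thesis by (simp add: Omega_def)
qed (simp add: Omega_def)

lemma Omega_pair_le:
  assumes "\<eta> \<in> Omega L N" "x < L" "y < L" "x \<noteq> y"
  shows "\<eta> x + \<eta> y \<le> N"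
proof -
  have "\<eta> x + \<eta> y = (\<Sum>z\<in>{x,y}. \<eta> z)" using assms by simp
  also have "\<dots> \<le> (\<Sum>z<L. \<eta> z)" using assms by (intro sum_mono2) auto
  finally show ?thesis using assms by (simp add: Omega_def)
qed

lemma Omega_sum_fractions:
  assumes "\<eta> \<in> Omega L N" "N > 0"
  shows "(\<Sum>x<L. real (\<eta> x) / real N) = 1"
  using assms by (simp add: Omega_def flip: sum_divide_distrib of_nat_sum)

lemma Omega_nonempty: "L > 0 \<Longrightarrow> Omega L N \<noteq> {}"
  by (auto simp: Omega_def intro!: exI[of _ "\<lambda>z. if z = 0 then N else 0"])

lemma sum_move_diff:
  fixes G :: "nat \<Rightarrow> real"
  assumes "x < L" "y < L" "x \<noteq> y"
  shows "(\<Sum>z<L. G (move \<eta> x y z)) - (\<Sum>z<L. G (\<eta> z))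
     = G (\<eta> x - 1) - G (\<eta> x) + G (\<eta> y + 1) - G (\<eta> y)"
proof -
  have off: "(\<Sum>z\<in>{..<L} - {x, y}. G (move \<eta> x y z)) = (\<Sum>z\<in>{..<L} - {x, y}. G (\<eta> z))"
    by (intro sum.cong) (auto simp: move_def)
  have split: "(\<Sum>z<L. F z) = F x + F y + (\<Sum>z\<in>{..<L} - {x, y}. F z)" for F :: "nat \<Rightarrow> real"
    using assms by (simp add: sum.remove[of _ x] sum.remove[of _ y] Diff_insert2[symmetric])
  show ?thesis
    using assms split[of "\<lambda>z. G (move \<eta> x y z)"] split[of "\<lambda>z. G (\<eta> z)"] off
    by (simp add: move_def)
qed

text \<open>Second-order expansion of g(u - 1/n) - g(u) + g(v + 1/n) - g(v), where g1 and g2 are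
  the first two derivatives of g.\<close>
definition jump_expansion :: "(real \<Rightarrow> real) \<Rightarrow> (real \<Rightarrow> real) \<Rightarrow> real \<Rightarrow> real \<Rightarrow> real \<Rightarrow> real" where
  "jump_expansion g1 g2 n u v = (g1 v - g1 u) / n + (g2 u + g2 v) / (2 * n^2)"

lemma jump_expansion_error:
  fixes g g1 g2 :: "real \<Rightarrow> real"
  assumes taylor: "\<And>u w. u \<in> {0..1} \<Longrightarrow> w \<in> {0..1} \<Longrightarrow>
       \<bar>g w - g u - (w - u) * g1 u - (w - u)^2 / 2 * g2 u\<bar> \<le> M * \<bar>w - u\<bar>^3"
    and n: "n > 0" and u: "1 / n \<le> u" "u \<le> 1" and v: "0 \<le> v" "v + 1 / n \<le> 1"
  shows "\<bar>g (u - 1/n) - g u + g (v + 1/n) - g v - jump_expansion g1 g2 n u v\<bar> \<le> 2 * M / n^3"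
proof -
  have i: "1 / n > 0" using n by simp
  have Eu: "\<bar>g (u - 1/n) - g u - (u - 1/n - u) * g1 u - (u - 1/n - u)^2 / 2 * g2 u\<bar>
        \<le> M * \<bar>u - 1/n - u\<bar>^3"
    using u i by (intro taylor; unfold atLeastAtMost_iff; intro conjI; linarith)
  have Ev: "\<bar>g (v + 1/n) - g v - (v + 1/n - v) * g1 v - (v + 1/n - v)^2 / 2 * g2 v\<bar>
        \<le> M * \<bar>v + 1/n - v\<bar>^3"
    using v i by (intro taylor; unfold atLeastAtMost_iff; intro conjI; linarith)
  have "g (u - 1/n) - g u + g (v + 1/n) - g v - jump_expansion g1 g2 n u v
      = (g (u - 1/n) - g u - (u - 1/n - u) * g1 u - (u - 1/n - u)^2 / 2 * g2 u)
        + (g (v + 1/n) - g v - (v + 1/n - v) * g1 v - (v + 1/n - v)^2 / 2 * g2 v)"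
    unfolding jump_expansion_def by (simp add: power_divide diff_divide_distrib add_divide_distrib algebra_simps)
  also have "\<bar>\<dots>\<bar> \<le> M * (1/n)^3 + M * (1/n)^3"
    using Eu Ev i by (intro abs_triangle_ineq[THEN order_trans] add_mono) auto
  finally show ?thesis by (simp add: power_divide)
qed

lemma gen_jump_expansion_error:
  fixes g g1 g2 :: "real \<Rightarrow> real"
  assumes taylor: "\<And>u w. u \<in> {0..1} \<Longrightarrow> w \<in> {0..1} \<Longrightarrow>
       \<bar>g w - g u - (w - u) * g1 u - (w - u)^2 / 2 * g2 u\<bar> \<le> M * \<bar>w - u\<bar>^3"
    and M: "M \<ge> 0" and N: "N > 0" and eta: "\<eta> \<in> Omega L N" and d: "d \<ge> 0"
  shows "\<bar>gen L d (\<lambda>\<xi>. \<Sum>z<L. g (real (\<xi> z) / real N)) \<eta>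
          - (\<Sum>x<L. \<Sum>y\<in>{..<L} - {x}. real (\<eta> x) * (d + real (\<eta> y)) *
               jump_expansion g1 g2 N (real (\<eta> x) / N) (real (\<eta> y) / N))\<bar>
         \<le> 2 * M * (d * L + N) / N^2"
proof -
  define c where "c x y = real (\<eta> x) * (d + real (\<eta> y))" for x y
  define K where "K = 2 * M / real N ^ 3"
  have c: "c x y \<ge> 0" for x y using d by (simp add: c_def)
  have K: "K \<ge> 0" using M by (simp add: K_def)
  define \<Delta> where "\<Delta> x y = (\<Sum>z<L. g (real (move \<eta> x y z) / N)) - (\<Sum>z<L. g (real (\<eta> z) / N))" for x y
  define J where "J x y = jump_expansion g1 g2 N (real (\<eta> x) / N) (real (\<eta> y) / N)" for x y
  have increment: "\<bar>c x y * \<Delta> x y - c x y * J x y\<bar> \<le> c x y * K"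
    if xy: "x < L" "y < L" "x \<noteq> y" for x y
  proof (cases "\<eta> x = 0")
    case False
    have pair: "\<eta> x + \<eta> y \<le> N" by (rule Omega_pair_le[OF eta xy])
    have "\<Delta> x y = g (real (\<eta> x) / N - 1 / N) - g (real (\<eta> x) / N)
                  + g (real (\<eta> y) / N + 1 / N) - g (real (\<eta> y) / N)"
      using sum_move_diff[OF xy, of "\<lambda>k. g (real k / N)" \<eta>] False
      by (simp add: \<Delta>_def of_nat_diff diff_divide_distrib add_divide_distrib add.commute)
    moreover have "\<bar>g (real (\<eta> x) / N - 1 / N) - g (real (\<eta> x) / N)
                  + g (real (\<eta> y) / N + 1 / N) - g (real (\<eta> y) / N) - J x y\<bar> \<le> K"
      unfolding J_def K_def
      by (rule jump_expansion_error[OF taylor]) (use False pair N in \<open>auto simp: field_simps\<close>)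
    ultimately have "\<bar>\<Delta> x y - J x y\<bar> \<le> K" by simp
    then show ?thesis
      using c[of x y] by (simp flip: right_diff_distrib add: abs_mult mult_left_mono)
  qed (simp add: c_def)
  have "\<bar>gen L d (\<lambda>\<xi>. \<Sum>z<L. g (real (\<xi> z) / real N)) \<eta> - (\<Sum>x<L. \<Sum>y\<in>{..<L} - {x}. c x y * J x y)\<bar>
      = \<bar>\<Sum>x<L. \<Sum>y\<in>{..<L} - {x}. c x y * \<Delta> x y - c x y * J x y\<bar>"
    by (simp add: gen_def c_def \<Delta>_def sum_subtractf)
  also have "\<dots> \<le> (\<Sum>x<L. \<Sum>y\<in>{..<L} - {x}. c x y * K)"
    using increment by (intro order_trans[OF sum_abs] sum_mono order_trans[OF sum_abs]) auto
  also have "\<dots> \<le> (\<Sum>x<L. \<Sum>y<L. c x y * K)"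
    using c K by (intro sum_mono sum_mono2) auto
  also have "\<dots> = K * N * (d * L + N)"
    using eta by (simp add: c_def Omega_def sum.distrib algebra_simps
        flip: sum_distrib_left sum_distrib_right of_nat_sum)
  also have "\<dots> = 2 * M * (d * L + N) / N^2"
    using N by (simp add: K_def power2_eq_square power3_eq_cube)
  finally show ?thesis by (simp add: c_def J_def)
qed

lemma jump_expansion_offdiagonal_sum:
  fixes a :: "nat \<Rightarrow> real" and g1 g2 :: "real \<Rightarrow> real"
  assumes n: "n > 0" and sum_a: "(\<Sum>y<L. a y) = 1"
  defines "S1 \<equiv> \<Sum>y<L. a y * g1 (a y)" and "S2 \<equiv> \<Sum>y<L. a y * g2 (a y)"
    and "T1 \<equiv> \<Sum>y<L. g1 (a y)" and "T2 \<equiv> \<Sum>y<L. g2 (a y)"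
  shows "(\<Sum>x<L. \<Sum>y\<in>{..<L} - {x}. n * a x * (d + n * a y) * jump_expansion g1 g2 n (a x) (a y))
    = (\<Sum>x<L. a x * (1 - a x) * g2 (a x)) + d * T1 - d * L * S1
      + d / (2 * n) * (L * S2 + T2) - d / n * S2"
proof -
  define f where "f x y = n * a x * (d + n * a y) * jump_expansion g1 g2 n (a x) (a y)" for x y
  have row: "(\<Sum>y<L. f x y) = (- d * L - n) * (a x * g1 (a x)) + (d * L / (2 * n) + 1 / 2) * (a x * g2 (a x))
      + (d * T1 + n * S1 + d / (2 * n) * T2 + S2 / 2) * a x" for x
  proof -
    have "(\<Sum>y<L. f x y) = (\<Sum>y<L. a x * (- d * g1 (a x) + d * g2 (a x) / (2 * n))
        + a x * (- n * g1 (a x) + g2 (a x) / 2) * a y + d * a x * g1 (a y)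
        + n * a x * (a y * g1 (a y)) + d * a x / (2 * n) * g2 (a y) + a x / 2 * (a y * g2 (a y)))"
      using n by (intro sum.cong refl) (simp add: f_def jump_expansion_def field_simps power2_eq_square)
    also have "\<dots> = a x * (- d * g1 (a x) + d * g2 (a x) / (2 * n)) * L
        + a x * (- n * g1 (a x) + g2 (a x) / 2) * (\<Sum>y<L. a y) + d * a x * T1
        + n * a x * S1 + d * a x / (2 * n) * T2 + a x / 2 * S2"
      by (simp add: S1_def S2_def T1_def T2_def sum.distrib flip: sum_distrib_left sum_divide_distrib)
    also have "\<dots> = (- d * L - n) * (a x * g1 (a x)) + (d * L / (2 * n) + 1 / 2) * (a x * g2 (a x))
        + (d * T1 + n * S1 + d / (2 * n) * T2 + S2 / 2) * a x"
      using sum_a n by (simp add: field_simps)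
    finally show ?thesis .
  qed
  have full: "(\<Sum>x<L. \<Sum>y<L. f x y) = S2 + d * T1 - d * L * S1 + d / (2 * n) * (L * S2 + T2)"
  proof -
    have "(\<Sum>x<L. \<Sum>y<L. f x y) = (- d * L - n) * S1 + (d * L / (2 * n) + 1 / 2) * S2
        + (d * T1 + n * S1 + d / (2 * n) * T2 + S2 / 2) * (\<Sum>x<L. a x)"
      unfolding row S1_def S2_def by (simp add: sum.distrib flip: sum_distrib_left sum_distrib_right)
    also have "\<dots> = S2 + d * T1 - d * L * S1 + d / (2 * n) * (L * S2 + T2)"
      using n sum_a by (simp add: field_simps)
    finally show ?thesis .
  qed
  have "f x x = d / n * (a x * g2 (a x)) + a x * a x * g2 (a x)" for x
    using n by (simp add: f_def jump_expansion_def field_simps power2_eq_square)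
  then have diagonal: "(\<Sum>x<L. f x x) = d / n * S2 + (\<Sum>x<L. a x * a x * g2 (a x))"
    by (simp add: S2_def sum.distrib sum_distrib_left)
  have "(\<Sum>x<L. \<Sum>y\<in>{..<L} - {x}. f x y) = (\<Sum>x<L. \<Sum>y<L. f x y) - (\<Sum>x<L. f x x)"
    by (simp add: sum_diff1 sum_subtractf)
  also have "\<dots> = (\<Sum>x<L. a x * (1 - a x) * g2 (a x)) + d * T1 - d * L * S1
      + d / (2 * n) * (L * S2 + T2) - d / n * S2"
    unfolding full diagonal by (simp add: S2_def algebra_simps sum_subtractf)
  finally show ?thesis by (simp add: f_def)
qed

lemma weighted_sum_abs_le:
  fixes a G :: "nat \<Rightarrow> real"
  assumes a: "\<And>x. a x \<ge> 0" and sum_a: "(\<Sum>y<L. a y) = 1" and G: "\<And>y. y < L \<Longrightarrow> \<bar>G y\<bar> \<le> M"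
  shows "\<bar>\<Sum>y<L. a y * G y\<bar> \<le> M"
proof -
  have "\<bar>\<Sum>y<L. a y * G y\<bar> \<le> (\<Sum>y<L. a y * M)"
    using a G by (intro order_trans[OF sum_abs] sum_mono) (auto simp: abs_mult intro: mult_left_mono)
  also have "\<dots> = M" using sum_a by (simp flip: sum_distrib_right)
  finally show ?thesis .
qed

lemma drift_error_bound:
  fixes a :: "nat \<Rightarrow> real" and g1 g2 :: "real \<Rightarrow> real"
  assumes n: "n > 0" and d: "d \<ge> 0" and sum_a: "(\<Sum>y<L. a y) = 1" and a: "\<And>x. a x \<in> {0..1}"
    and g1: "\<And>u. u \<in> {0..1} \<Longrightarrow> \<bar>g1 u\<bar> \<le> M"
    and g1_lip: "\<And>u. u \<in> {0..1} \<Longrightarrow> \<bar>g1 u - g1 0\<bar> \<le> M * u"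
    and g2: "\<And>u. u \<in> {0..1} \<Longrightarrow> \<bar>g2 u\<bar> \<le> M"
  shows "\<bar>(\<Sum>x<L. \<Sum>y\<in>{..<L} - {x}. n * a x * (d + n * a y) * jump_expansion g1 g2 n (a x) (a y))
          - (\<Sum>x<L. a x * (1 - a x) * g2 (a x) + \<theta> * a x * (g1 0 - g1 (a x)))\<bar>
         \<le> d * M + 2 * M * \<bar>d * L - \<theta>\<bar> + d * L * M / n + d * M / n"
proof -
  define S1 where "S1 = (\<Sum>y<L. a y * g1 (a y))"
  define S2 where "S2 = (\<Sum>y<L. a y * g2 (a y))"
  define T1 where "T1 = (\<Sum>y<L. g1 (a y))"
  define T2 where "T2 = (\<Sum>y<L. g2 (a y))"
  have a0: "a x \<ge> 0" for x using a[of x] by simp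
  have S1: "\<bar>S1\<bar> \<le> M" unfolding S1_def by (rule weighted_sum_abs_le[OF a0 sum_a]) (intro g1 a)
  have S2: "\<bar>S2\<bar> \<le> M" unfolding S2_def by (rule weighted_sum_abs_le[OF a0 sum_a]) (intro g2 a)
  have T1: "\<bar>T1 - L * g1 0\<bar> \<le> M"
  proof -
    have "T1 - L * g1 0 = (\<Sum>y<L. g1 (a y) - g1 0)" by (simp add: T1_def sum_subtractf)
    then have "\<bar>T1 - L * g1 0\<bar> \<le> (\<Sum>y<L. \<bar>g1 (a y) - g1 0\<bar>)" by (simp add: sum_abs)
    also have "\<dots> \<le> (\<Sum>y<L. M * a y)" using g1_lip a by (intro sum_mono) auto
    also have "\<dots> = M" using sum_a by (simp flip: sum_distrib_left)
    finally show ?thesis .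
  qed
  have T2: "\<bar>T2\<bar> \<le> L * M"
  proof -
    have "\<bar>T2\<bar> \<le> (\<Sum>y<L. M)" unfolding T2_def using g2 a by (intro order_trans[OF sum_abs] sum_mono) auto
    then show ?thesis by simp
  qed
  have abs_sum4: "\<bar>p + q + r - s\<bar> \<le> \<bar>p\<bar> + \<bar>q\<bar> + \<bar>r\<bar> + \<bar>s\<bar>" for p q r s :: real
    by arith
  have g10: "\<bar>g1 0\<bar> \<le> M" using g1[of 0] by simp
  have "(\<Sum>x<L. \<theta> * a x * (g1 0 - g1 (a x))) = \<theta> * g1 0 * (\<Sum>x<L. a x) - \<theta> * S1"
    by (simp add: S1_def right_diff_distrib sum_subtractf sum_distrib_left ac_simps)
  then have target: "(\<Sum>x<L. a x * (1 - a x) * g2 (a x) + \<theta> * a x * (g1 0 - g1 (a x)))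
      = (\<Sum>x<L. a x * (1 - a x) * g2 (a x)) + \<theta> * (g1 0 - S1)"
    using sum_a by (simp add: sum.distrib right_diff_distrib)
  have "\<bar>(\<Sum>x<L. \<Sum>y\<in>{..<L} - {x}. n * a x * (d + n * a y) * jump_expansion g1 g2 n (a x) (a y))
          - (\<Sum>x<L. a x * (1 - a x) * g2 (a x) + \<theta> * a x * (g1 0 - g1 (a x)))\<bar>
      = \<bar>d * (T1 - L * g1 0) + (d * L - \<theta>) * (g1 0 - S1) + d / (2 * n) * (L * S2 + T2) - d / n * S2\<bar>"
    unfolding jump_expansion_offdiagonal_sum[OF n sum_a] target
    by (simp add: S1_def S2_def T1_def T2_def algebra_simps)
  also have "\<dots> \<le> \<bar>d * (T1 - L * g1 0)\<bar> + \<bar>(d * L - \<theta>) * (g1 0 - S1)\<bar>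
      + \<bar>d / (2 * n) * (L * S2 + T2)\<bar> + \<bar>d / n * S2\<bar>"
    by (rule abs_sum4)
  also have "\<dots> \<le> d * M + \<bar>d * L - \<theta>\<bar> * (2 * M) + d / (2 * n) * (L * M + L * M) + d / n * M"
  proof -
    have "\<bar>L * S2 + T2\<bar> \<le> L * M + L * M"
      using S2 T2 by (intro abs_triangle_ineq[THEN order_trans] add_mono) (auto simp: abs_mult mult_left_mono)
    from mult_left_mono[OF this, of "d / (2 * n)"]
    have "\<bar>d / (2 * n) * (L * S2 + T2)\<bar> \<le> d / (2 * n) * (L * M + L * M)"
      using n d by (simp add: abs_mult)
    moreover have "\<bar>g1 0 - S1\<bar> \<le> 2 * M" using S1 g10 by linarith
    then have "\<bar>(d * L - \<theta>) * (g1 0 - S1)\<bar> \<le> \<bar>d * L - \<theta>\<bar> * (2 * M)"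
      by (simp add: abs_mult mult_left_mono)
    moreover have "\<bar>d * (T1 - L * g1 0)\<bar> \<le> d * M" using T1 d by (simp add: abs_mult mult_left_mono)
    moreover have "\<bar>d / n * S2\<bar> \<le> d / n * M"
      using mult_left_mono[OF S2, of "d / n"] n d by (simp add: abs_mult)
    ultimately show ?thesis by linarith
  qed
  also have "\<dots> = d * M + 2 * M * \<bar>d * L - \<theta>\<bar> + d * L * M / n + d * M / n"
    using n by (simp add: field_simps)
  finally show ?thesis .
qed

definition expansion_error :: "real \<Rightarrow> real \<Rightarrow> real \<Rightarrow> nat \<Rightarrow> nat \<Rightarrow> real" where
  "expansion_error M \<theta> d L N =
     2 * M * (d * L + N) / N^2 + d * M + 2 * M * \<bar>d * L - \<theta>\<bar> + d * L * M / N + d * M / N"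

lemma gen_second_order_error:
  fixes g g1 g2 g3 :: "real \<Rightarrow> real"
  assumes d1: "\<And>v. v \<in> {0..1} \<Longrightarrow> (g has_real_derivative g1 v) (at v within {0..1})"
    and d2: "\<And>v. v \<in> {0..1} \<Longrightarrow> (g1 has_real_derivative g2 v) (at v within {0..1})"
    and d3: "\<And>v. v \<in> {0..1} \<Longrightarrow> (g2 has_real_derivative g3 v) (at v within {0..1})"
    and bounds: "\<And>v. v \<in> {0..1} \<Longrightarrow> \<bar>g1 v\<bar> \<le> M \<and> \<bar>g2 v\<bar> \<le> M \<and> \<bar>g3 v\<bar> \<le> M"
    and N: "N > 0" and eta: "\<eta> \<in> Omega L N" and d: "d \<ge> 0"
  shows "\<bar>gen L d (\<lambda>\<xi>. \<Sum>z<L. g (real (\<xi> z) / N)) \<eta>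
          - (\<Sum>x<L. real (\<eta> x) / N * (1 - real (\<eta> x) / N) * g2 (real (\<eta> x) / N)
               + \<theta> * (real (\<eta> x) / N) * (g1 0 - g1 (real (\<eta> x) / N)))\<bar>
         \<le> expansion_error M \<theta> d L N"
proof -
  define a where "a x = real (\<eta> x) / N" for x
  have M: "M \<ge> 0" using bounds[of 0] by auto
  have a: "a x \<in> {0..1}" for x using Omega_le[OF eta, of x] N by (simp add: a_def)
  have sum_a: "(\<Sum>x<L. a x) = 1" unfolding a_def using eta N by (rule Omega_sum_fractions)
  have taylor: "\<bar>g w - g u - (w - u) * g1 u - (w - u)^2 / 2 * g2 u\<bar> \<le> M * \<bar>w - u\<bar>^3"
    if "u \<in> {0..1}" "w \<in> {0..1}" for u w
    using taylor2_remainder_bound[OF d1 d2 d3 _ that, of M] bounds by blast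
  have g1_lip: "\<bar>g1 u - g1 0\<bar> \<le> M * u" if "u \<in> {0..1}" for u
    using abs_diff_le_derivative_bound[OF d2, of 0 u M] bounds that by auto
  have "\<bar>gen L d (\<lambda>\<xi>. \<Sum>z<L. g (real (\<xi> z) / N)) \<eta>
      - (\<Sum>x<L. \<Sum>y\<in>{..<L} - {x}. N * a x * (d + N * a y) * jump_expansion g1 g2 N (a x) (a y))\<bar>
      \<le> 2 * M * (d * L + N) / N^2"
    using gen_jump_expansion_error[OF taylor M N eta d] N by (simp add: a_def)
  moreover have "\<bar>(\<Sum>x<L. \<Sum>y\<in>{..<L} - {x}. N * a x * (d + N * a y) * jump_expansion g1 g2 N (a x) (a y))
      - (\<Sum>x<L. a x * (1 - a x) * g2 (a x) + \<theta> * a x * (g1 0 - g1 (a x)))\<bar>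
      \<le> d * M + 2 * M * \<bar>d * L - \<theta>\<bar> + d * L * M / N + d * M / N"
    using N d sum_a a bounds g1_lip by (intro drift_error_bound) auto
  ultimately show ?thesis
    unfolding expansion_error_def a_def[symmetric] by linarith
qed

lemma expansion_error_tendsto_zero:
  fixes d :: "nat \<Rightarrow> real" and Ls Ns :: "nat \<Rightarrow> nat"
  assumes dlim: "(\<lambda>L. d L * real L) \<longlonglongrightarrow> \<theta>"
    and Linf: "filterlim Ls at_top sequentially" and Ninf: "filterlim Ns at_top sequentially"
  shows "(\<lambda>k. expansion_error M \<theta> (d (Ls k)) (Ls k) (Ns k)) \<longlonglongrightarrow> 0"
proof -
  define D where "D k = d (Ls k) * real (Ls k)" for k
  define iL where "iL k = inverse (real (Ls k))" for k
  define iN where "iN k = inverse (real (Ns k))" for k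
  have D: "D \<longlonglongrightarrow> \<theta>" unfolding D_def using filterlim_compose[OF dlim Linf] by (simp add: o_def)
  have iL: "iL \<longlonglongrightarrow> 0" and iN: "iN \<longlonglongrightarrow> 0" unfolding iL_def iN_def
    by (intro tendsto_inverse_0_at_top filterlim_compose[OF filterlim_real_sequentially] Linf Ninf)+
  have "eventually (\<lambda>k. Ls k \<ge> 1) sequentially" "eventually (\<lambda>k. Ns k \<ge> 1) sequentially"
    using Linf Ninf by (simp_all add: filterlim_at_top)
  then have "eventually (\<lambda>k. 2 * M * (D k * iN k ^ 2 + iN k) + D k * iL k * M + 2 * M * \<bar>D k - \<theta>\<bar>
            + D k * M * iN k + D k * iL k * M * iN k = expansion_error M \<theta> (d (Ls k)) (Ls k) (Ns k)) sequentially"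
    by eventually_elim (simp add: expansion_error_def D_def iL_def iN_def field_simps power2_eq_square)
  moreover have "(\<lambda>k. 2 * M * (D k * iN k ^ 2 + iN k) + D k * iL k * M + 2 * M * \<bar>D k - \<theta>\<bar>
            + D k * M * iN k + D k * iL k * M * iN k)
        \<longlonglongrightarrow> 2 * M * (\<theta> * 0 ^ 2 + 0) + \<theta> * 0 * M + 2 * M * \<bar>\<theta> - \<theta>\<bar> + \<theta> * M * 0 + \<theta> * 0 * M * 0"
    by (intro tendsto_intros D iL iN)
  ultimately show ?thesis by (simp add: tendsto_cong)
qed

lemma SUP_abs_bounds:
  fixes f :: "'a \<Rightarrow> real"
  assumes "A \<noteq> {}" and "\<And>x. x \<in> A \<Longrightarrow> \<bar>f x\<bar> \<le> B"
  shows "0 \<le> (SUP x\<in>A. \<bar>f x\<bar>) \<and> (SUP x\<in>A. \<bar>f x\<bar>) \<le> B"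
proof -
  obtain x where "x \<in> A" using assms(1) by blast
  moreover have "bdd_above ((\<lambda>x. \<bar>f x\<bar>) ` A)" using assms(2) by (intro bdd_aboveI2) auto
  ultimately show ?thesis using assms by (auto intro: cSUP_upper2 cSUP_least)
qed

text \<open>h + u h1 and 2 h1 + u h2 are the first two derivatives of u h(u).\<close>
lemma mult_A_op_eq:
  "u * A_op \<theta> h h1 h2 u = u * (1 - u) * (2 * h1 u + u * h2 u) + \<theta> * u * (h 0 - (h u + u * h1 u))"
  by (simp add: A_op_def algebra_simps)

lemma gen_emp_error_bound:
  fixes h h1 h2 h3 :: "real \<Rightarrow> real"
  assumes d1: "\<And>v. v \<in> {0..1} \<Longrightarrow> (h has_real_derivative h1 v) (at v within {0..1})"
    and d2: "\<And>v. v \<in> {0..1} \<Longrightarrow> (h1 has_real_derivative h2 v) (at v within {0..1})"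
    and d3: "\<And>v. v \<in> {0..1} \<Longrightarrow> (h2 has_real_derivative h3 v) (at v within {0..1})"
    and bounds: "\<And>v. v \<in> {0..1} \<Longrightarrow>
      \<bar>h v + v * h1 v\<bar> \<le> M \<and> \<bar>2 * h1 v + v * h2 v\<bar> \<le> M \<and> \<bar>3 * h2 v + v * h3 v\<bar> \<le> M"
    and N: "N > 0" and eta: "\<eta> \<in> Omega L N" and d: "d \<ge> 0"
  shows "\<bar>gen L d (\<lambda>\<xi>. emp L N \<xi> h) \<eta> - emp L N \<eta> (A_op \<theta> h h1 h2)\<bar> \<le> expansion_error M \<theta> d L N"
proof -
  have "((\<lambda>u. u * h u) has_real_derivative h v + v * h1 v) (at v within {0..1})"
    and "((\<lambda>u. h u + u * h1 u) has_real_derivative 2 * h1 v + v * h2 v) (at v within {0..1})"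
    and "((\<lambda>u. 2 * h1 u + u * h2 u) has_real_derivative 3 * h2 v + v * h3 v) (at v within {0..1})"
    if "v \<in> {0..1}" for v
    using d1[OF that] d2[OF that] d3[OF that] by (auto intro!: derivative_eq_intros)
  from gen_second_order_error[OF this bounds N eta d] show ?thesis
    unfolding emp_def by (simp add: mult_A_op_eq mult.assoc)
qed

theorem lemma2p2:
  fixes \<rho> \<theta> :: real and d :: "nat \<Rightarrow> real"
    and h h1 h2 h3 :: "real \<Rightarrow> real"
    and Ls Ns :: "nat \<Rightarrow> nat"
  assumes rho: "\<rho> > 0"
    and theta: "\<theta> \<ge> 0"
    and dpos: "\<And>L. d L > 0"
    and dlim: "(\<lambda>L. d L * real L) \<longlonglongrightarrow> \<theta>"
    and d1: "\<And>z. z \<in> {0..1} \<Longrightarrow> (h has_real_derivative h1 z) (at z within {0..1})"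
    and d2: "\<And>z. z \<in> {0..1} \<Longrightarrow> (h1 has_real_derivative h2 z) (at z within {0..1})"
    and d3: "\<And>z. z \<in> {0..1} \<Longrightarrow> (h2 has_real_derivative h3 z) (at z within {0..1})"
    and c3: "continuous_on {0..1} h3"
    and Linf: "filterlim Ls at_top sequentially"
    and Ninf: "filterlim Ns at_top sequentially"
    and ratio: "(\<lambda>k. real (Ns k) / real (Ls k)) \<longlonglongrightarrow> \<rho>"
  shows "(\<lambda>k. SUP \<eta>\<in>Omega (Ls k) (Ns k).
            \<bar>gen (Ls k) (d (Ls k)) (\<lambda>\<xi>. emp (Ls k) (Ns k) \<xi> h) \<eta>
             - emp (Ls k) (Ns k) \<eta> (A_op \<theta> h h1 h2)\<bar>) \<longlonglongrightarrow> 0"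
proof -
  define S where "S k = (SUP \<eta>\<in>Omega (Ls k) (Ns k).
    \<bar>gen (Ls k) (d (Ls k)) (\<lambda>\<xi>. emp (Ls k) (Ns k) \<xi> h) \<eta> - emp (Ls k) (Ns k) \<eta> (A_op \<theta> h h1 h2)\<bar>)" for k
  have "continuous_on {0..1} (\<lambda>v. \<bar>h v + v * h1 v\<bar> + \<bar>2 * h1 v + v * h2 v\<bar> + \<bar>3 * h2 v + v * h3 v\<bar>)"
    using DERIV_continuous_on[OF d1] DERIV_continuous_on[OF d2] DERIV_continuous_on[OF d3] c3
    by (intro continuous_intros) auto
  then obtain M where "\<And>v. v \<in> {0..1} \<Longrightarrow>
      norm (\<bar>h v + v * h1 v\<bar> + \<bar>2 * h1 v + v * h2 v\<bar> + \<bar>3 * h2 v + v * h3 v\<bar>) \<le> M"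
    using continuous_on_compact_bound[OF compact_Icc] by blast
  then have M: "\<bar>h v + v * h1 v\<bar> \<le> M \<and> \<bar>2 * h1 v + v * h2 v\<bar> \<le> M \<and> \<bar>3 * h2 v + v * h3 v\<bar> \<le> M"
    if "v \<in> {0..1}" for v
    using that by (smt (verit) abs_ge_zero real_norm_def)
  have "eventually (\<lambda>k. Ls k \<ge> 1) sequentially" "eventually (\<lambda>k. Ns k \<ge> 1) sequentially"
    using Linf Ninf by (simp_all add: filterlim_at_top)
  then have "eventually (\<lambda>k. 0 \<le> S k \<and> S k \<le> expansion_error M \<theta> (d (Ls k)) (Ls k) (Ns k)) sequentially"
    unfolding S_def
    by eventually_elim
       (intro SUP_abs_bounds Omega_nonempty gen_emp_error_bound[OF d1 d2 d3 M], auto intro: less_imp_le dpos)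
  then have "S \<longlonglongrightarrow> 0"
    by (intro tendsto_sandwich[OF _ _ tendsto_const expansion_error_tendsto_zero[OF dlim Linf Ninf]])
       (auto elim: eventually_mono)
  then show ?thesis unfolding S_def[abs_def] .
qed

end
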